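(* Let $L\subset\mathbb{Z}^3$ be the sublattice generated by $(4,0,0),(0,2,0),(0,0,2)$, and let $I\subset\mathbb{B}[x_1^{\pm1},x_2^{\pm1},x_3^{\pm1}]$ be the zero-dimensional tropical ideal of degree $2$ corresponding to $L$, i.e. the tropical ideal whose polynomials of minimal support are the binomials $\mathbf x^{\mathbf u}\oplus\mathbf x^{\mathbf v}$ with $\mathbf u\ne\mathbf v$, $\mathbf u-\mathbf v\in L$, and the trinomials $\mathbf x^{\mathbf u}\oplus\mathbf x^{\mathbf v}\oplus\mathbf x^{\mathbf w}$ with $\mathbf u,\mathbf v,\mathbf w$ lying in three distinct cosets of $L$. Then $I$ is not realizable: there is no field $K$ and ideal $J\subset K[x_1^{\pm1},x_2^{\pm1},x_3^{\pm1}]$ with $I=\operatorname{trop}(J)$.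
   Context: $\mathbb{B}=\{\infty,0\}$ with $\oplus=\min$ and multiplication $+$. For a field $K$ and $F\in K[x_1^{\pm1},\dots,x_n^{\pm1}]$, $\operatorname{trop}(F)=\bigoplus_{\mathbf u\in\operatorname{supp}(F)}\mathbf x^{\mathbf u}\in\mathbb{B}[x_1^{\pm1},\dots,x_n^{\pm1}]$, and for an ideal $J$, $\operatorname{trop}(J)$ is the ideal generated by $\{\operatorname{trop}(F):F\in J\}$. A tropical ideal is realizable if it equals $\operatorname{trop}(J)$ for some field $K$ and ideal $J$ over $K$. *)

theory Defs
  imports Main
begin

type_synonym exps = "int \<times> int \<times> int"

definition eadd :: "exps \<Rightarrow> exps \<Rightarrow> exps" where
  "eadd u v = (fst u + fst v, fst (snd u) + fst (snd v), snd (snd u) + snd (snd v))"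

definition esub :: "exps \<Rightarrow> exps \<Rightarrow> exps" where
  "esub u v = (fst u - fst v, fst (snd u) - fst (snd v), snd (snd u) - snd (snd v))"

definition supp :: "(exps \<Rightarrow> 'k::zero) \<Rightarrow> exps set" where
  "supp F = {u. F u \<noteq> 0}"

definition laurent :: "(exps \<Rightarrow> 'k::zero) set" where
  "laurent = {F. finite (supp F)}"

definition ladd :: "(exps \<Rightarrow> 'k::plus) \<Rightarrow> (exps \<Rightarrow> 'k) \<Rightarrow> exps \<Rightarrow> 'k" where
  "ladd F G = (\<lambda>w. F w + G w)"

definition lmult :: "(exps \<Rightarrow> 'k::comm_semiring_1) \<Rightarrow> (exps \<Rightarrow> 'k) \<Rightarrow> exps \<Rightarrow> 'k" where
  "lmult F G = (\<lambda>w. \<Sum>p\<in>{p \<in> supp F \<times> supp G. eadd (fst p) (snd p) = w}.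
                      F (fst p) * G (snd p))"

definition lideal :: "(exps \<Rightarrow> 'k::field) set \<Rightarrow> bool" where
  "lideal J \<longleftrightarrow> J \<subseteq> laurent \<and> (\<lambda>_. 0) \<in> J
     \<and> (\<forall>F\<in>J. \<forall>G\<in>J. ladd F G \<in> J)
     \<and> (\<forall>F\<in>J. \<forall>G\<in>laurent. lmult G F \<in> J)"

text \<open>Polynomials in B[x^{+-1}] (B = {inf,0}) are identified with their supports,
  i.e. finite subsets of Z^3 (the infinity polynomial is the empty set).
  Tropical addition (min) is union, multiplication is Minkowski sum.\<close>
definition tmult :: "exps set \<Rightarrow> exps set \<Rightarrow> exps set" where
  "tmult A B = {eadd a b | a b. a \<in> A \<and> b \<in> B}"

definition trop :: "(exps \<Rightarrow> 'k::zero) \<Rightarrow> exps set" where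
  "trop F = supp F"

inductive_set tgen :: "exps set set \<Rightarrow> exps set set" for S where
  zero: "{} \<in> tgen S"
| gen: "s \<in> S \<Longrightarrow> s \<in> tgen S"
| add: "A \<in> tgen S \<Longrightarrow> B \<in> tgen S \<Longrightarrow> A \<union> B \<in> tgen S"
| mult: "A \<in> tgen S \<Longrightarrow> finite G \<Longrightarrow> tmult G A \<in> tgen S"

definition trop_ideal :: "(exps \<Rightarrow> 'k::field) set \<Rightarrow> exps set set" where
  "trop_ideal J = tgen {trop F | F. F \<in> J}"

definition inL :: "exps \<Rightarrow> bool" where
  "inL u \<longleftrightarrow> (4::int) dvd fst u \<and> (2::int) dvd fst (snd u) \<and> (2::int) dvd snd (snd u)"

definition circuitL :: "exps set \<Rightarrow> bool" where
  "circuitL C \<longleftrightarrow>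
     (\<exists>u v. C = {u, v} \<and> u \<noteq> v \<and> inL (esub u v)) \<or>
     (\<exists>u v w. C = {u, v, w} \<and> \<not> inL (esub u v) \<and> \<not> inL (esub u w) \<and> \<not> inL (esub v w))"

text \<open>The tropical ideal I with these circuits: its elements (over B) are exactly the
  finite unions of circuits (including the empty union, the infinity polynomial).\<close>
definition I_L :: "exps set set" where
  "I_L = {A. finite A \<and> (\<forall>a\<in>A. \<exists>C. circuitL C \<and> a \<in> C \<and> C \<subseteq> A)}"

end

theory Submission
  imports Defs
begin

text \<open>Suppose J realizes I. Each circuit of I is then the support of some polynomial of J, while a
  polynomial of J supported on two points in different cosets of L must vanish. Let
  F = \<alpha> + \<beta> y + \<gamma> z be a trinomial of J and b0 + b2 y^2, c0 + c2 z^2 binomials of J. Reducing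
  (\<gamma> z - \<alpha> - \<beta> y) F = \<gamma>^2 z^2 - \<alpha>^2 - 2\<alpha>\<beta> y - \<beta>^2 y^2 modulo the binomials leaves a polynomial
  of J supported on {1, y}, so 2\<alpha>\<beta> = 0 and K has characteristic 2. Doing the same with a
  trinomial \<alpha> + \<beta> y + \<gamma> x leaves, in characteristic 2, a polynomial supported on {1, x^2} whose
  coefficient of x^2 is \<gamma>^2 \<noteq> 0, although (2,0,0) \<notin> L.\<close>

definition lmonom :: "'k::zero \<Rightarrow> exps \<Rightarrow> exps \<Rightarrow> 'k" where
  "lmonom c u = (\<lambda>w. if w = u then c else 0)"

definition lshift :: "'k::comm_semiring_1 \<Rightarrow> exps \<Rightarrow> (exps \<Rightarrow> 'k) \<Rightarrow> exps \<Rightarrow> 'k" where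
  "lshift c g F = (\<lambda>w. c * F (esub w g))"

lemma lmonom_apply: "lmonom (c::'k::semiring_1) u w = c * of_bool (w = u)"
  by (simp add: lmonom_def)

lemma esub_eq_iff: "esub w g = u \<longleftrightarrow> w = eadd g u"
  by (auto simp: eadd_def esub_def prod_eq_iff)

lemma esub_eadd [simp]: "esub (eadd g u) g = u"
  by (simp add: esub_eq_iff)

lemma eadd_esub [simp]: "eadd g (esub w g) = w"
  using esub_eq_iff by metis

lemma eadd_commute: "eadd u v = eadd v u"
  by (simp add: eadd_def add.commute)

lemma eadd_zero [simp]: "eadd (0,0,0) u = u" "eadd u (0,0,0) = u"
  by (simp_all add: eadd_def)

lemma lmonom_laurent: "lmonom c u \<in> laurent"
proof -
  have "supp (lmonom c u) \<subseteq> {u}"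
    by (auto simp: supp_def lmonom_def)
  then show ?thesis
    by (auto simp: laurent_def intro: finite_subset)
qed

lemma lmult_lmonom: "lmult (lmonom c g) F = lshift c g F"
proof
  fix w
  have "{p \<in> supp (lmonom c g) \<times> supp F. eadd (fst p) (snd p) = w}
      = (if c = 0 \<or> F (esub w g) = 0 then {} else {(g, esub w g)})"
    by (auto simp: supp_def lmonom_def esub_eq_iff)
  then show "lmult (lmonom c g) F w = lshift c g F w"
    by (simp add: lmult_def lshift_def lmonom_def)
qed

lemma lideal_lshift: "lideal J \<Longrightarrow> F \<in> J \<Longrightarrow> lshift c g F \<in> J"
  using lmonom_laurent[of c g] lmult_lmonom[of c g F] unfolding lideal_def by metis

lemma lideal_ladd: "lideal J \<Longrightarrow> F \<in> J \<Longrightarrow> G \<in> J \<Longrightarrow> ladd F G \<in> J"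
  unfolding lideal_def by blast

lemma supp_in_trop_ideal: "F \<in> J \<Longrightarrow> supp F \<in> trop_ideal J"
  by (auto simp: trop_ideal_def trop_def intro: tgen.gen)

text \<open>The supports of J are closed under monomial shifts, so the covering property survives
  the generator tmult of tgen.\<close>
lemma trop_ideal_covered_by_supports:
  assumes "lideal J" "A \<in> trop_ideal J" "a \<in> A"
  shows "\<exists>F\<in>J. a \<in> supp F \<and> supp F \<subseteq> A"
  using assms(2,3) unfolding trop_ideal_def
proof (induction arbitrary: a)
  case (gen s)
  then show ?case by (auto simp: trop_def)
next
  case (mult A G)
  then obtain g b where a: "a = eadd g b" "g \<in> G" "b \<in> A"
    by (auto simp: tmult_def)
  then obtain F where F: "F \<in> J" "b \<in> supp F" "supp F \<subseteq> A"
    using mult.IH by blast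
  have "supp (lshift 1 g F) \<subseteq> tmult G A"
  proof
    fix w assume "w \<in> supp (lshift 1 g F)"
    then have "esub w g \<in> A"
      using F(3) by (auto simp: supp_def lshift_def)
    moreover have "w = eadd g (esub w g)"
      by simp
    ultimately show "w \<in> tmult G A"
      using a(2) unfolding tmult_def by blast
  qed
  moreover have "a \<in> supp (lshift 1 g F)"
    using a F(2) by (simp add: supp_def lshift_def)
  ultimately show ?case
    using lideal_lshift[OF assms(1) F(1)] by blast
qed blast+

lemma binomial_expand:
  fixes F :: "exps \<Rightarrow> 'k::monoid_add"
  assumes "supp F = {u, v}" "u \<noteq> v"
  shows "F = ladd (lmonom (F u) u) (lmonom (F v) v)" "F u \<noteq> 0" "F v \<noteq> 0"
proof -
  have zero: "F w = 0" if "w \<noteq> u" "w \<noteq> v" for w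
    using assms(1) that unfolding supp_def by blast
  show "F = ladd (lmonom (F u) u) (lmonom (F v) v)"
    unfolding fun_eq_iff using assms(2) by (simp add: ladd_def lmonom_def zero)
  show "F u \<noteq> 0" "F v \<noteq> 0"
    using assms(1) unfolding supp_def by blast+
qed

lemma trinomial_expand:
  fixes F :: "exps \<Rightarrow> 'k::monoid_add"
  assumes "supp F = {u, v, w}" "u \<noteq> v" "u \<noteq> w" "v \<noteq> w"
  shows "F = ladd (ladd (lmonom (F u) u) (lmonom (F v) v)) (lmonom (F w) w)"
    "F u \<noteq> 0" "F v \<noteq> 0" "F w \<noteq> 0"
proof -
  have zero: "F x = 0" if "x \<noteq> u" "x \<noteq> v" "x \<noteq> w" for x
    using assms(1) that unfolding supp_def by blast
  show "F = ladd (ladd (lmonom (F u) u) (lmonom (F v) v)) (lmonom (F w) w)"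
    unfolding fun_eq_iff using assms(2-4) by (simp add: ladd_def lmonom_def zero)
  show "F u \<noteq> 0" "F v \<noteq> 0" "F w \<noteq> 0"
    using assms(1) unfolding supp_def by blast+
qed

text \<open>The identity (\<gamma> z - \<alpha> - \<beta> y) (\<alpha> + \<beta> y + \<gamma> z) + (\<beta>^2/b2) (b0 + b2 y^2)
  = \<gamma>^2 z^2 - 2\<alpha>\<beta> y + (\<beta>^2 b0/b2 - \<alpha>^2), for arbitrary monomials y and z.\<close>
lemma lideal_trinomial_square_reduction:
  fixes \<alpha> \<beta> \<gamma> b0 b2 :: "'k::field"
  assumes "lideal J" "b2 \<noteq> 0"
    and F: "ladd (ladd (lmonom \<alpha> (0,0,0)) (lmonom \<beta> y)) (lmonom \<gamma> z) \<in> J"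
      (is "?F \<in> J")
    and B: "ladd (lmonom b0 (0,0,0)) (lmonom b2 (eadd y y)) \<in> J"
      (is "?B \<in> J")
  shows "ladd (ladd (lmonom (\<gamma>*\<gamma>) (eadd z z)) (lmonom (-2*\<alpha>*\<beta>) y))
           (lmonom (\<beta>*\<beta>*b0/b2 - \<alpha>*\<alpha>) (0,0,0)) \<in> J"
proof -
  have "ladd (ladd (ladd (lshift \<gamma> z ?F) (lshift (-\<alpha>) (0,0,0) ?F)) (lshift (-\<beta>) y ?F))
          (lshift (\<beta>*\<beta>/b2) (0,0,0) ?B) \<in> J"
    by (intro lideal_ladd lideal_lshift assms)
  also have "ladd (ladd (ladd (lshift \<gamma> z ?F) (lshift (-\<alpha>) (0,0,0) ?F)) (lshift (-\<beta>) y ?F))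
          (lshift (\<beta>*\<beta>/b2) (0,0,0) ?B)
      = ladd (ladd (lmonom (\<gamma>*\<gamma>) (eadd z z)) (lmonom (-2*\<alpha>*\<beta>) y))
          (lmonom (\<beta>*\<beta>*b0/b2 - \<alpha>*\<alpha>) (0,0,0))"
    using \<open>b2 \<noteq> 0\<close>
    by (auto simp: fun_eq_iff ladd_def lshift_def lmonom_apply esub_eq_iff eadd_commute
        field_simps)
  finally show ?thesis .
qed

lemma inL_esub_commute: "inL (esub u v) \<longleftrightarrow> inL (esub v u)"
proof -
  have "esub v u = (- fst (esub u v), - fst (snd (esub u v)), - snd (snd (esub u v)))"
    by (simp add: esub_def)
  then show ?thesis
    by (simp add: inL_def)
qed

lemma inL_esub_self: "inL (esub u u)"
  by (simp add: inL_def esub_def)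

lemma circuitL_binomial: "u \<noteq> v \<Longrightarrow> inL (esub u v) \<Longrightarrow> circuitL {u, v}"
  unfolding circuitL_def by blast

lemma circuitL_trinomial:
  "\<not> inL (esub u v) \<Longrightarrow> \<not> inL (esub u w) \<Longrightarrow> \<not> inL (esub v w) \<Longrightarrow> circuitL {u, v, w}"
  unfolding circuitL_def by blast

lemma circuitL_cases:
  assumes "circuitL D"
  obtains u v where "D = {u, v}" "u \<noteq> v" "inL (esub u v)"
  | u v w where "D = {u, v, w}" "u \<noteq> v" "u \<noteq> w" "v \<noteq> w"
      "\<not> inL (esub u v)" "\<not> inL (esub u w)" "\<not> inL (esub v w)"
      "\<not> inL (esub v u)" "\<not> inL (esub w u)" "\<not> inL (esub w v)"
  using assms inL_esub_self inL_esub_commute unfolding circuitL_def by metis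

lemma circuitL_in_I_L: "circuitL C \<Longrightarrow> C \<in> I_L"
  by (auto simp: I_L_def elim: circuitL_cases)

lemma circuitL_subset_eq:
  assumes "circuitL C" "circuitL D" "D \<subseteq> C"
  shows "D = C"
  using assms(1)
proof (cases rule: circuitL_cases)
  case C: 1
  from assms(2) show ?thesis
  proof (cases rule: circuitL_cases)
    case 1
    then show ?thesis using assms(3) C by auto
  next
    case 2
    then show ?thesis using assms(3) C by auto
  qed
next
  case C: 2
  from assms(2) show ?thesis
  proof (cases rule: circuitL_cases)
    case 1
    then show ?thesis using assms(3) C by auto
  next
    case 2
    then show ?thesis using assms(3) C by auto
  qed
qed

lemma circuitL_not_subset_pair:
  assumes "circuitL D" "\<not> inL (esub u v)"
  shows "\<not> D \<subseteq> {u, v}"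
  using assms(1)
proof (cases rule: circuitL_cases)
  case (1 a b)
  show ?thesis
  proof
    assume "D \<subseteq> {u, v}"
    then have "(a = u \<and> b = v) \<or> (a = v \<and> b = u)"
      using 1 by blast
    then show False
      using 1 assms(2) inL_esub_commute by blast
  qed
next
  case 2
  then show ?thesis by auto
qed

lemma I_L_subset_circuitL:
  assumes "circuitL C" "X \<in> I_L" "X \<subseteq> C" "X \<noteq> {}"
  shows "X = C"
proof -
  obtain D where "circuitL D" "D \<subseteq> X"
    using assms(2,4) unfolding I_L_def by blast
  with assms(1,3) show ?thesis
    using circuitL_subset_eq by blast
qed

lemma I_L_subset_pair:
  assumes "X \<in> I_L" "X \<subseteq> {u, v}" "\<not> inL (esub u v)"
  shows "X = {}"
  using assms circuitL_not_subset_pair unfolding I_L_def by blast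

locale realization =
  fixes J :: "(exps \<Rightarrow> 'k::field) set"
  assumes lideal: "lideal J"
    and trop_eq: "trop_ideal J = I_L"
begin

lemma circuit_support:
  assumes "circuitL C"
  obtains F where "F \<in> J" "supp F = C"
proof -
  obtain a where "a \<in> C"
    using assms by (elim circuitL_cases) auto
  then obtain F where F: "F \<in> J" "a \<in> supp F" "supp F \<subseteq> C"
    using trop_ideal_covered_by_supports[OF lideal] circuitL_in_I_L[OF assms] trop_eq by metis
  have "supp F = C"
    using I_L_subset_circuitL[OF assms _ F(3)] supp_in_trop_ideal[OF F(1)] F(2) trop_eq by blast
  with F(1) show thesis ..
qed

lemma binomial_in_ideal:
  assumes "u \<noteq> v" "inL (esub u v)"
  obtains a b where "a \<noteq> 0" "b \<noteq> 0" "ladd (lmonom a u) (lmonom b v) \<in> J"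
proof -
  obtain F where "F \<in> J" "supp F = {u, v}"
    using circuit_support[OF circuitL_binomial[OF assms]] .
  with assms(1) show thesis
    using that binomial_expand by metis
qed

lemma trinomial_in_ideal:
  assumes "\<not> inL (esub u v)" "\<not> inL (esub u w)" "\<not> inL (esub v w)"
  obtains a b c where "a \<noteq> 0" "b \<noteq> 0" "c \<noteq> 0"
    "ladd (ladd (lmonom a u) (lmonom b v)) (lmonom c w) \<in> J"
proof -
  obtain F where "F \<in> J" "supp F = {u, v, w}"
    using circuit_support[OF circuitL_trinomial[OF assms]] .
  moreover have "u \<noteq> v" "u \<noteq> w" "v \<noteq> w"
    using assms inL_esub_self by metis+
  ultimately show thesis
    using that trinomial_expand by metis
qed

lemma vanishes_on_pair:
  assumes "F \<in> J" "supp F \<subseteq> {u, v}" "\<not> inL (esub u v)"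
  shows "F w = 0"
proof -
  have "supp F = {}"
    using I_L_subset_pair[OF _ assms(2,3)] supp_in_trop_ideal[OF assms(1)] trop_eq by simp
  then show ?thesis
    unfolding supp_def by blast
qed

lemma char_two: "(2::'k) = 0"
proof -
  obtain b0 b2 where "b2 \<noteq> 0" and B: "ladd (lmonom b0 (0,0,0)) (lmonom b2 (0,2,0)) \<in> J"
    by (rule binomial_in_ideal[of "(0,0,0)" "(0,2,0)"]) (auto simp: inL_def esub_def)
  obtain c0 c2 where "c2 \<noteq> 0" and C: "ladd (lmonom c0 (0,0,0)) (lmonom c2 (0,0,2)) \<in> J"
    by (rule binomial_in_ideal[of "(0,0,0)" "(0,0,2)"]) (auto simp: inL_def esub_def)
  obtain \<alpha> \<beta> \<gamma> where "\<alpha> \<noteq> 0" "\<beta> \<noteq> 0"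
    and T: "ladd (ladd (lmonom \<alpha> (0,0,0)) (lmonom \<beta> (0,1,0))) (lmonom \<gamma> (0,0,1)) \<in> J"
    by (rule trinomial_in_ideal[of "(0,0,0)" "(0,1,0)" "(0,0,1)"]) (auto simp: inL_def esub_def)
  define \<kappa> where "\<kappa> = \<beta>*\<beta>*b0/b2 - \<alpha>*\<alpha>"
  have reduced: "ladd (ladd (lmonom (\<gamma>*\<gamma>) (0,0,2)) (lmonom (-2*\<alpha>*\<beta>) (0,1,0))) (lmonom \<kappa> (0,0,0)) \<in> J"
    using lideal_trinomial_square_reduction[OF lideal \<open>b2 \<noteq> 0\<close> T] B
    by (simp add: \<kappa>_def eadd_def)
  have "ladd (ladd (ladd (lmonom (\<gamma>*\<gamma>) (0,0,2)) (lmonom (-2*\<alpha>*\<beta>) (0,1,0))) (lmonom \<kappa> (0,0,0)))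
      (lshift (- \<gamma>*\<gamma>/c2) (0,0,0) (ladd (lmonom c0 (0,0,0)) (lmonom c2 (0,0,2)))) \<in> J"
    (is "?G \<in> J")
    by (rule lideal_ladd[OF lideal reduced lideal_lshift[OF lideal C]])
  moreover have "supp ?G \<subseteq> {(0,0,0), (0,1,0)}"
    using \<open>c2 \<noteq> 0\<close> by (auto simp: supp_def ladd_def lshift_def lmonom_def esub_def split: if_splits)
  ultimately have "?G (0,1,0) = 0"
    by (rule vanishes_on_pair) (simp add: inL_def esub_def)
  then have "2 * (\<alpha> * \<beta>) = 0"
    by (simp add: ladd_def lshift_def lmonom_def esub_def)
  with \<open>\<alpha> \<noteq> 0\<close> \<open>\<beta> \<noteq> 0\<close> show ?thesis
    by simp
qed

lemma char_not_two: "(2::'k) \<noteq> 0"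
proof
  assume two: "(2::'k) = 0"
  obtain b0 b2 where "b2 \<noteq> 0" and B: "ladd (lmonom b0 (0,0,0)) (lmonom b2 (0,2,0)) \<in> J"
    by (rule binomial_in_ideal[of "(0,0,0)" "(0,2,0)"]) (auto simp: inL_def esub_def)
  obtain \<alpha> \<beta> \<gamma> where "\<gamma> \<noteq> 0"
    and S: "ladd (ladd (lmonom \<alpha> (0,0,0)) (lmonom \<beta> (0,1,0))) (lmonom \<gamma> (1,0,0)) \<in> J"
    by (rule trinomial_in_ideal[of "(0,0,0)" "(0,1,0)" "(1,0,0)"]) (auto simp: inL_def esub_def)
  define \<kappa> where "\<kappa> = \<beta>*\<beta>*b0/b2 - \<alpha>*\<alpha>"
  have "ladd (ladd (lmonom (\<gamma>*\<gamma>) (2,0,0)) (lmonom (-2*\<alpha>*\<beta>) (0,1,0))) (lmonom \<kappa> (0,0,0)) \<in> J"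
    (is "?G \<in> J")
    using lideal_trinomial_square_reduction[OF lideal \<open>b2 \<noteq> 0\<close> S] B
    by (simp add: \<kappa>_def eadd_def)
  moreover have "supp ?G \<subseteq> {(0,0,0), (2,0,0)}"
    using two by (auto simp: supp_def ladd_def lmonom_def split: if_splits)
  ultimately have "?G (2,0,0) = 0"
    by (rule vanishes_on_pair) (simp add: inL_def esub_def)
  with \<open>\<gamma> \<noteq> 0\<close> show False
    by (simp add: ladd_def lmonom_def)
qed

end

theorem mainTheorem12:
  shows "\<not> (\<exists>J :: (exps \<Rightarrow> 'k::field) set. lideal J \<and> trop_ideal J = I_L)"
proof
  assume "\<exists>J :: (exps \<Rightarrow> 'k::field) set. lideal J \<and> trop_ideal J = I_L"
  then obtain J :: "(exps \<Rightarrow> 'k::field) set" where "realization J"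
    by (auto intro: realization.intro)
  then show False
    using realization.char_two realization.char_not_two by blast
qed

end
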